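(* Let $G$ be a finite non-abelian group admitting a GRR and let $m\ge 1$ be an integer. Then $G$ admits an $m$-GRR.
   Context: A group $G$ admits a GRR if there is a Cayley graph $\mathrm{Cay}(G,R)$ (vertex set $G$, edges $\{g,rg\}$, $R=R^{-1}$, $1\notin R$) whose automorphism group is isomorphic to $G$. An $m$-GRR for $G$ is a finite regular simple graph admitting a semiregular group of automorphisms isomorphic to $G$ with exactly $m$ orbits on vertices and whose full automorphism group is isomorphic to $G$. *)

theory Defs
  imports "HOL-Algebra.Algebra"
begin

definition simple_graph :: "'v set \<Rightarrow> ('v \<Rightarrow> 'v \<Rightarrow> bool) \<Rightarrow> bool" where
  "simple_graph V E \<longleftrightarrow>
     (\<forall>x y. E x y \<longrightarrow> x \<in> V \<and> y \<in> V) \<and>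
     (\<forall>x y. E x y \<longrightarrow> E y x) \<and>
     (\<forall>x. \<not> E x x)"

definition regular_graph :: "'v set \<Rightarrow> ('v \<Rightarrow> 'v \<Rightarrow> bool) \<Rightarrow> bool" where
  "regular_graph V E \<longleftrightarrow> (\<exists>k. \<forall>v\<in>V. card {w \<in> V. E v w} = k)"

definition graph_aut :: "'v set \<Rightarrow> ('v \<Rightarrow> 'v \<Rightarrow> bool) \<Rightarrow> ('v \<Rightarrow> 'v) \<Rightarrow> bool" where
  "graph_aut V E f \<longleftrightarrow>
     bij_betw f V V \<and>
     (\<forall>x\<in>V. \<forall>y\<in>V. E (f x) (f y) \<longleftrightarrow> E x y) \<and>
     (\<forall>x. x \<notin> V \<longrightarrow> f x = x)"

definition Aut_group :: "'v set \<Rightarrow> ('v \<Rightarrow> 'v \<Rightarrow> bool) \<Rightarrow> ('v \<Rightarrow> 'v) monoid" where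
  "Aut_group V E = \<lparr>carrier = {f. graph_aut V E f}, monoid.mult = (\<lambda>f g. f \<circ> g), monoid.one = id\<rparr>"

definition cayley_adj :: "('a, 'b) monoid_scheme \<Rightarrow> 'a set \<Rightarrow> 'a \<Rightarrow> 'a \<Rightarrow> bool" where
  "cayley_adj G R x y \<longleftrightarrow> x \<in> carrier G \<and> y \<in> carrier G \<and> (\<exists>r\<in>R. y = r \<otimes>\<^bsub>G\<^esub> x)"

definition admits_GRR :: "('a, 'b) monoid_scheme \<Rightarrow> bool" where
  "admits_GRR G \<longleftrightarrow>
     (\<exists>R. R \<subseteq> carrier G \<and> \<one>\<^bsub>G\<^esub> \<notin> R \<and> (\<forall>r\<in>R. inv\<^bsub>G\<^esub> r \<in> R) \<and>
          Aut_group (carrier G) (cayley_adj G R) \<cong> G)"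

definition orbits_of :: "('v \<Rightarrow> 'v) set \<Rightarrow> 'v set \<Rightarrow> 'v set set" where
  "orbits_of H V = (\<lambda>v. {h v | h. h \<in> H}) ` V"

definition semiregular_on :: "('v \<Rightarrow> 'v) set \<Rightarrow> 'v set \<Rightarrow> bool" where
  "semiregular_on H V \<longleftrightarrow> (\<forall>h\<in>H. \<forall>v\<in>V. h v = v \<longrightarrow> h = id)"

text \<open>Vertices of the graph are taken from nat (any finite graph is isomorphic to one on nat).\<close>
definition admits_mGRR :: "('a, 'b) monoid_scheme \<Rightarrow> nat \<Rightarrow> bool" where
  "admits_mGRR G m \<longleftrightarrow>
     (\<exists>(V :: nat set) E H.
        finite V \<and> simple_graph V E \<and> regular_graph V E \<and>
        subgroup H (Aut_group V E) \<and>
        semiregular_on H V \<and>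
        (Aut_group V E)\<lparr>carrier := H\<rparr> \<cong> G \<and>
        card (orbits_of H V) = m \<and>
        Aut_group V E \<cong> G)"

end

theory Submission
  imports Defs
begin

text \<open>Let \<open>Cay(G, R)\<close> be a GRR. As \<open>G\<close> is not abelian, \<open>R\<close> is not closed under conjugation
  (otherwise left multiplications would be automorphisms too), so there are \<open>a \<in> G\<close> and
  \<open>r \<in> R\<close> with \<open>a r a\<inverse> \<notin> R\<close>. Take \<open>m\<close> copies \<open>G \<times> {i}\<close> of \<open>Cay(G, R)\<close>, indexed by
  \<open>i \<in> \<int>/m\<close>, and join \<open>(g, i)\<close> to \<open>(t g, i + 1)\<close> for \<open>t \<in> T = {1, a, a r}\<close>, using \<open>T\<inverse>\<close>
  instead of \<open>T\<close> between the layers 1 and 2. The graph is regular and right multiplications act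
  on it semiregularly with the \<open>m\<close> layers as orbits. Left and right quotients of elements of
  \<open>T\<close> lie in \<open>R\<close> for the same pairs except \<open>(a, a r)\<close> and \<open>(a r, a)\<close>, so counting triangles
  at a vertex singles out the layers 1 and 2. An automorphism thus maps layer 2 onto itself,
  where it acts as an automorphism of \<open>Cay(G, R)\<close>, i.e. as a right multiplication; since no
  left multiplication other than the identity maps \<open>T\<close> into itself, the same right
  multiplication is forced on the next layer, and so around the cycle. Hence the automorphism
  group is \<open>G\<close> acting by right multiplication.\<close>

section \<open>Automorphism groups of graphs\<close>

lemma graph_aut_id: "graph_aut V E id"
  by (simp add: graph_aut_def)

lemma graph_aut_mem: "graph_aut V E f \<Longrightarrow> x \<in> V \<Longrightarrow> f x \<in> V"
  unfolding graph_aut_def by (auto dest: bij_betwE)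

lemma graph_aut_adj: "graph_aut V E f \<Longrightarrow> x \<in> V \<Longrightarrow> y \<in> V \<Longrightarrow> E (f x) (f y) \<longleftrightarrow> E x y"
  by (simp add: graph_aut_def)

lemma graph_aut_comp:
  assumes "graph_aut V E f" "graph_aut V E g"
  shows "graph_aut V E (f \<circ> g)"
  using assms graph_aut_mem[OF assms(2)] bij_betw_trans[of g V V f V]
  unfolding graph_aut_def by auto

lemma graph_aut_inverse:
  assumes f: "graph_aut V E f"
  shows "\<exists>g. graph_aut V E g \<and> g \<circ> f = id"
proof -
  define g where "g x = (if x \<in> V then inv_into V f x else x)" for x
  have bij: "bij_betw f V V" using f by (simp add: graph_aut_def)
  have gV: "bij_betw g V V"
    using bij_betw_inv_into[OF bij] by (rule bij_betw_cong[THEN iffD1, rotated]) (simp add: g_def)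
  have fg: "f (g x) = x" if "x \<in> V" for x
    using that bij by (simp add: g_def bij_betw_inv_into_right)
  have "graph_aut V E g"
    using f gV fg graph_aut_mem[of V E g] unfolding graph_aut_def by (metis g_def)
  moreover have "g \<circ> f = id"
  proof
    show "(g \<circ> f) x = id x" for x
      using f bij
      by (cases "x \<in> V") (auto simp: g_def graph_aut_def bij_betw_inv_into_left graph_aut_mem)
  qed
  ultimately show ?thesis by blast
qed

lemma group_Aut_group: "group (Aut_group V E)"
proof (rule groupI)
  show "\<exists>g\<in>carrier (Aut_group V E). g \<otimes>\<^bsub>Aut_group V E\<^esub> f = \<one>\<^bsub>Aut_group V E\<^esub>"
    if "f \<in> carrier (Aut_group V E)" for f
    using that graph_aut_inverse by (fastforce simp: Aut_group_def)
qed (auto simp: Aut_group_def graph_aut_id graph_aut_comp comp_assoc)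

definition triangles_at :: "('v \<Rightarrow> 'v \<Rightarrow> bool) \<Rightarrow> 'v \<Rightarrow> nat" where
  "triangles_at E v = card {(u, w). E v u \<and> E v w \<and> E u w}"

lemma triangles_at_graph_aut:
  assumes E: "simple_graph V E" and f: "graph_aut V E f" and v: "v \<in> V"
  shows "triangles_at E (f v) = triangles_at E v"
proof -
  have EV: "E x y \<Longrightarrow> x \<in> V \<and> y \<in> V" for x y
    using E by (simp add: simple_graph_def)
  have bij: "bij_betw f V V" and Ef: "\<And>x y. x \<in> V \<Longrightarrow> y \<in> V \<Longrightarrow> E (f x) (f y) \<longleftrightarrow> E x y"
    using f by (auto simp: graph_aut_def)
  let ?W = "{(u, w). E v u \<and> E v w \<and> E u w}"
  have "{(u, w). E (f v) u \<and> E (f v) w \<and> E u w} = map_prod f f ` ?W"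
  proof (intro equalityI subsetI)
    fix p assume "p \<in> {(u, w). E (f v) u \<and> E (f v) w \<and> E u w}"
    then obtain u w where p: "p = (u, w)" "E (f v) u" "E (f v) w" "E u w" by auto
    then obtain u' w' where "u' \<in> V" "w' \<in> V" "u = f u'" "w = f w'"
      using EV bij by (metis bij_betw_imp_surj_on imageE)
    then show "p \<in> map_prod f f ` ?W" using p Ef v by auto
  qed (use Ef EV v in auto)
  moreover have "inj_on (map_prod f f) ?W"
    using bij EV by (auto simp: bij_betw_def inj_on_def)
  ultimately show ?thesis by (simp add: triangles_at_def card_image)
qed

section \<open>Relabelling the vertices of a graph\<close>

locale graph_relabelling =
  fixes h :: "'u \<Rightarrow> 'v" and U :: "'u set" and V :: "'v set" and E :: "'v \<Rightarrow> 'v \<Rightarrow> bool"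
  assumes bij_h: "bij_betw h U V" and simple: "simple_graph V E"
begin

definition adj :: "'u \<Rightarrow> 'u \<Rightarrow> bool" where
  "adj x y \<longleftrightarrow> x \<in> U \<and> y \<in> U \<and> E (h x) (h y)"

definition push :: "('u \<Rightarrow> 'u) \<Rightarrow> 'v \<Rightarrow> 'v" where
  "push f v = (if v \<in> V then h (f (inv_into U h v)) else v)"

definition pull :: "('v \<Rightarrow> 'v) \<Rightarrow> 'u \<Rightarrow> 'u" where
  "pull g x = (if x \<in> U then inv_into U h (g (h x)) else x)"

lemma h_mem: "x \<in> U \<Longrightarrow> h x \<in> V"
  using bij_h by (auto dest: bij_betwE)

lemma inv_h_mem: "v \<in> V \<Longrightarrow> inv_into U h v \<in> U"
  using bij_betw_inv_into[OF bij_h] by (auto dest: bij_betwE)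

lemma h_inv_h [simp]: "v \<in> V \<Longrightarrow> h (inv_into U h v) = v"
  using bij_h by (simp add: bij_betw_inv_into_right)

lemma inv_h_h [simp]: "x \<in> U \<Longrightarrow> inv_into U h (h x) = x"
  using bij_h by (simp add: bij_betw_inv_into_left)

lemma push_h: "x \<in> U \<Longrightarrow> push f (h x) = h (f x)"
  by (simp add: push_def h_mem)

lemma graph_aut_push:
  assumes f: "graph_aut U adj f"
  shows "graph_aut V E (push f)"
proof -
  have "bij_betw (h \<circ> f \<circ> inv_into U h) V V"
    using f bij_h bij_betw_inv_into[OF bij_h] unfolding graph_aut_def by (meson bij_betw_trans)
  then have "bij_betw (push f) V V"
    by (rule bij_betw_cong[THEN iffD1, rotated]) (simp add: push_def)
  moreover have "E (push f v) (push f w) \<longleftrightarrow> E v w" if "v \<in> V" "w \<in> V" for v w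
    using f that graph_aut_mem[OF f] inv_h_mem
    by (auto simp: push_def graph_aut_def adj_def)
  ultimately show ?thesis by (simp add: graph_aut_def push_def)
qed

lemma graph_aut_pull:
  assumes g: "graph_aut V E g"
  shows "graph_aut U adj (pull g)"
proof -
  have "bij_betw (inv_into U h \<circ> g \<circ> h) U U"
    using g bij_h bij_betw_inv_into[OF bij_h] unfolding graph_aut_def by (meson bij_betw_trans)
  then have "bij_betw (pull g) U U"
    by (rule bij_betw_cong[THEN iffD1, rotated]) (simp add: pull_def)
  moreover have "adj (pull g x) (pull g y) \<longleftrightarrow> adj x y" if "x \<in> U" "y \<in> U" for x y
    using g that graph_aut_mem[OF g] h_mem inv_h_mem
    by (auto simp: pull_def graph_aut_def adj_def)
  ultimately show ?thesis by (simp add: graph_aut_def pull_def)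
qed

lemma push_pull: "graph_aut V E g \<Longrightarrow> push (pull g) = g"
  by (rule ext) (auto simp: push_def pull_def inv_h_mem graph_aut_mem graph_aut_def)

lemma pull_push: "graph_aut U adj f \<Longrightarrow> pull (push f) = f"
  by (rule ext) (auto simp: push_def pull_def h_mem graph_aut_mem graph_aut_def)

lemma push_comp: "graph_aut U adj g \<Longrightarrow> push (f \<circ> g) = push f \<circ> push g"
  by (rule ext) (auto simp: push_def h_mem inv_h_mem graph_aut_mem)

lemma push_iso: "push \<in> iso (Aut_group U adj) (Aut_group V E)"
proof (rule isoI)
  show "push \<in> hom (Aut_group U adj) (Aut_group V E)"
    by (rule homI) (simp_all add: Aut_group_def graph_aut_push push_comp)
  show "bij_betw push (carrier (Aut_group U adj)) (carrier (Aut_group V E))"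
    by (rule bij_betw_byWitness[where f' = pull])
      (auto simp: Aut_group_def push_pull pull_push graph_aut_push graph_aut_pull)
qed

lemma simple_graph_adj: "simple_graph U adj"
  using simple by (auto simp: simple_graph_def adj_def)

lemma regular_graph_adj:
  assumes "regular_graph V E"
  shows "regular_graph U adj"
proof -
  obtain k where k: "\<forall>v\<in>V. card {w \<in> V. E v w} = k"
    using assms by (auto simp: regular_graph_def)
  have "card {y \<in> U. adj x y} = k" if x: "x \<in> U" for x
  proof -
    have "h ` {y \<in> U. adj x y} = {w \<in> V. E (h x) w}"
      using x h_mem inv_h_mem by (auto simp: adj_def image_iff) (metis h_inv_h)
    moreover have "inj_on h {y \<in> U. adj x y}"
      using bij_h by (auto simp: bij_betw_def intro: inj_on_subset)
    ultimately show ?thesis using k h_mem[OF x] by (metis card_image)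
  qed
  then show ?thesis by (auto simp: regular_graph_def)
qed

lemma semiregular_adj:
  assumes "semiregular_on (carrier (Aut_group V E)) V"
  shows "semiregular_on (carrier (Aut_group U adj)) U"
  unfolding semiregular_on_def
proof (intro ballI impI)
  fix f x assume f: "f \<in> carrier (Aut_group U adj)" and x: "x \<in> U" "f x = x"
  have f_aut: "graph_aut U adj f" using f by (simp add: Aut_group_def)
  have "push f (h x) = h x" using x by (simp add: push_h)
  then have "push f = id"
    using assms graph_aut_push[OF f_aut] h_mem[OF x(1)]
    unfolding semiregular_on_def Aut_group_def by auto
  moreover have "pull id = id" by (auto simp: pull_def)
  ultimately show "f = id" using pull_push[OF f_aut] by simp
qed

lemma card_orbits_adj:
  "card (orbits_of (carrier (Aut_group U adj)) U) = card (orbits_of (carrier (Aut_group V E)) V)"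
proof -
  let ?AU = "carrier (Aut_group U adj)" and ?AV = "carrier (Aut_group V E)"
  have orbit: "{g (h x) |g. g \<in> ?AV} = h ` {f x |f. f \<in> ?AU}" if x: "x \<in> U" for x
  proof -
    have "{g (h x) |g. g \<in> ?AV} = {push f (h x) |f. f \<in> ?AU}"
      using push_pull graph_aut_push graph_aut_pull by (auto simp: Aut_group_def) metis
    then show ?thesis using x push_h by auto
  qed
  have "orbits_of ?AV V = image h ` orbits_of ?AU U"
    using bij_h orbit by (auto simp: orbits_of_def bij_betw_def image_image)
  moreover have "inj_on (image h) (orbits_of ?AU U)"
  proof -
    have "orbits_of ?AU U \<subseteq> Pow U"
      by (auto simp: orbits_of_def Aut_group_def graph_aut_mem)
    then show ?thesis
      using inj_on_image_Pow[of h U] bij_h by (auto simp: bij_betw_def intro: inj_on_subset)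
  qed
  ultimately show ?thesis by (simp add: card_image)
qed

end

lemma admits_mGRR_of_graph:
  fixes V :: "'v set"
  assumes "finite V" "simple_graph V E" "regular_graph V E" "Aut_group V E \<cong> G"
    and "semiregular_on (carrier (Aut_group V E)) V"
    and "card (orbits_of (carrier (Aut_group V E)) V) = m"
  shows "admits_mGRR G m"
proof -
  obtain h where h: "bij_betw h {0..<card V} V"
    using ex_bij_betw_nat_finite[OF assms(1)] by blast
  interpret graph_relabelling h "{0..<card V}" V E
    using h assms(2) by unfold_locales
  have "subgroup (carrier (Aut_group {0..<card V} adj)) (Aut_group {0..<card V} adj)"
    by (rule group.subgroup_self[OF group_Aut_group])
  moreover have "Aut_group {0..<card V} adj \<cong> G"
    using push_iso assms(4) by (metis is_isoI iso_trans)
  ultimately show ?thesis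
    unfolding admits_mGRR_def
    using simple_graph_adj regular_graph_adj[OF assms(3)] semiregular_adj[OF assms(5)]
      card_orbits_adj assms(6)
    by (intro exI[of _ "{0..<card V}"] exI[of _ adj]) (auto simp: Aut_group_def)
qed

section \<open>Cayley graphs and GRRs\<close>

context group
begin

lemma inv_mult_cancel_left [simp]: "b \<in> carrier G \<Longrightarrow> z \<in> carrier G \<Longrightarrow> inv b \<otimes> (b \<otimes> z) = z"
  by (simp add: m_assoc[symmetric])

lemma mult_inv_cancel_left [simp]: "b \<in> carrier G \<Longrightarrow> z \<in> carrier G \<Longrightarrow> b \<otimes> (inv b \<otimes> z) = z"
  by (simp add: m_assoc[symmetric])

lemma mult_inv_cancel_right [simp]: "x \<in> carrier G \<Longrightarrow> b \<in> carrier G \<Longrightarrow> x \<otimes> b \<otimes> inv b = x"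
  by (simp add: m_assoc)

lemma quot_mult_right [simp]:
  "x \<in> carrier G \<Longrightarrow> y \<in> carrier G \<Longrightarrow> b \<in> carrier G \<Longrightarrow> y \<otimes> b \<otimes> inv (x \<otimes> b) = y \<otimes> inv x"
  by (simp add: inv_mult_group m_assoc)

lemma cayley_adj_iff:
  assumes "R \<subseteq> carrier G"
  shows "cayley_adj G R x y \<longleftrightarrow> x \<in> carrier G \<and> y \<in> carrier G \<and> y \<otimes> inv x \<in> R"
proof
  assume "cayley_adj G R x y"
  then obtain s where "s \<in> R" "y = s \<otimes> x" "x \<in> carrier G" "y \<in> carrier G"
    by (auto simp: cayley_adj_def)
  with assms show "x \<in> carrier G \<and> y \<in> carrier G \<and> y \<otimes> inv x \<in> R"
    by (auto simp: m_assoc)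
next
  assume xy: "x \<in> carrier G \<and> y \<in> carrier G \<and> y \<otimes> inv x \<in> R"
  then have "y = (y \<otimes> inv x) \<otimes> x" by (simp add: m_assoc)
  with xy show "cayley_adj G R x y" by (auto simp: cayley_adj_def)
qed

lemma graph_aut_cayleyI:
  assumes R: "R \<subseteq> carrier G" and bij: "bij_betw \<phi> (carrier G) (carrier G)"
    and quot: "\<And>x y. x \<in> carrier G \<Longrightarrow> y \<in> carrier G \<Longrightarrow> \<phi> y \<otimes> inv (\<phi> x) \<in> R \<longleftrightarrow> y \<otimes> inv x \<in> R"
  shows "graph_aut (carrier G) (cayley_adj G R) (\<lambda>x. if x \<in> carrier G then \<phi> x else x)"
proof -
  have "bij_betw (\<lambda>x. if x \<in> carrier G then \<phi> x else x) (carrier G) (carrier G)"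
    using bij by (rule bij_betw_cong[THEN iffD1, rotated]) simp
  then show ?thesis
    using quot bij_betwE[OF bij] by (auto simp: graph_aut_def cayley_adj_iff[OF R])
qed

lemma bij_betw_mult_right: "b \<in> carrier G \<Longrightarrow> bij_betw (\<lambda>x. x \<otimes> b) (carrier G) (carrier G)"
  by (rule bij_betwI[where g = "\<lambda>x. x \<otimes> inv b"]) (auto simp: m_assoc)

lemma bij_betw_mult_left: "a \<in> carrier G \<Longrightarrow> bij_betw (\<lambda>x. a \<otimes> x) (carrier G) (carrier G)"
  by (rule bij_betwI[where g = "\<lambda>x. inv a \<otimes> x"]) (auto simp: m_assoc[symmetric])

lemma graph_aut_cayley_mult_right:
  assumes "R \<subseteq> carrier G" "b \<in> carrier G"
  shows "graph_aut (carrier G) (cayley_adj G R) (\<lambda>x. if x \<in> carrier G then x \<otimes> b else x)"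
  using assms by (intro graph_aut_cayleyI bij_betw_mult_right) simp_all

end

locale cayley_GRR = group G for G :: "('a, 'b) monoid_scheme" (structure) +
  fixes R :: "'a set"
  assumes finite_carrier: "finite (carrier G)"
    and R_subset: "R \<subseteq> carrier G"
    and one_notin_R: "\<one> \<notin> R"
    and inv_R: "r \<in> R \<Longrightarrow> inv r \<in> R"
    and Aut_iso: "Aut_group (carrier G) (cayley_adj G R) \<cong> G"

lemma admits_GRR_imp_cayley_GRR:
  assumes "group G" "finite (carrier G)" "admits_GRR G"
  obtains R where "cayley_GRR G R"
  using assms by (auto simp: admits_GRR_def cayley_GRR_def cayley_GRR_axioms_def)

context cayley_GRR
begin

lemma inv_mem_R_iff: "x \<in> carrier G \<Longrightarrow> inv x \<in> R \<longleftrightarrow> x \<in> R"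
  using inv_R by fastforce

text \<open>The right multiplications are \<open>|G|\<close> distinct automorphisms, so they are all of them.\<close>

lemma graph_aut_is_mult_right:
  assumes f: "graph_aut (carrier G) (cayley_adj G R) f"
  shows "\<exists>b\<in>carrier G. \<forall>x\<in>carrier G. f x = x \<otimes> b"
proof -
  let ?A = "carrier (Aut_group (carrier G) (cayley_adj G R))"
  define \<rho> where "\<rho> b = (\<lambda>x. if x \<in> carrier G then x \<otimes> b else x)" for b
  have sub: "\<rho> ` carrier G \<subseteq> ?A"
    using graph_aut_cayley_mult_right[OF R_subset] by (auto simp: Aut_group_def \<rho>_def)
  have "inj_on \<rho> (carrier G)"
  proof (rule inj_onI)
    fix b c assume "b \<in> carrier G" "c \<in> carrier G" "\<rho> b = \<rho> c"
    then have "\<rho> b \<one> = \<rho> c \<one>" by simp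
    then show "b = c" using \<open>b \<in> carrier G\<close> \<open>c \<in> carrier G\<close> by (simp add: \<rho>_def)
  qed
  then have "card (\<rho> ` carrier G) = card ?A"
    using iso_same_card[OF Aut_iso] by (simp add: card_image)
  moreover have "finite ?A" using iso_finite[OF Aut_iso] finite_carrier by simp
  ultimately have "\<rho> ` carrier G = ?A" using sub by (simp add: card_subset_eq)
  moreover have "f \<in> ?A" using f by (simp add: Aut_group_def)
  ultimately obtain b where "b \<in> carrier G" "f = \<rho> b" by blast
  then show ?thesis by (auto simp: \<rho>_def)
qed

lemma not_comm_imp_conj_notin:
  assumes "\<not> comm_group G"
  shows "\<exists>a\<in>carrier G. \<exists>r\<in>R. a \<otimes> r \<otimes> inv a \<notin> R"
proof (rule ccontr)
  assume "\<not> ?thesis"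
  then have conj: "a \<otimes> r \<otimes> inv a \<in> R" if "a \<in> carrier G" "r \<in> R" for a r
    using that by blast
  have "a \<otimes> x = x \<otimes> a" if a: "a \<in> carrier G" and x: "x \<in> carrier G" for a x
  proof -
    have "a \<otimes> v \<otimes> inv (a \<otimes> u) \<in> R \<longleftrightarrow> v \<otimes> inv u \<in> R"
      if "u \<in> carrier G" "v \<in> carrier G" for u v
    proof -
      have "a \<otimes> v \<otimes> inv (a \<otimes> u) = a \<otimes> (v \<otimes> inv u) \<otimes> inv a"
        using that a by (simp add: inv_mult_group m_assoc)
      moreover have "inv a \<otimes> (a \<otimes> (v \<otimes> inv u) \<otimes> inv a) \<otimes> inv (inv a) = v \<otimes> inv u"
        using that a by (simp add: m_assoc)
      ultimately show ?thesis
        using conj[of a "v \<otimes> inv u"] conj[of "inv a" "a \<otimes> (v \<otimes> inv u) \<otimes> inv a"] that a by auto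
    qed
    then have "graph_aut (carrier G) (cayley_adj G R) (\<lambda>y. if y \<in> carrier G then a \<otimes> y else y)"
      using a by (intro graph_aut_cayleyI R_subset bij_betw_mult_left) simp_all
    then obtain b where b: "b \<in> carrier G" "\<forall>y\<in>carrier G. (if y \<in> carrier G then a \<otimes> y else y) = y \<otimes> b"
      using graph_aut_is_mult_right by blast
    then have "a = b" using a by (metis one_closed l_one r_one)
    then show ?thesis using b x by simp
  qed
  then have "comm_group G" by (intro group_comm_groupI) auto
  with assms show False by contradiction
qed

end

section \<open>Layered Cayley graphs\<close>

context group
begin

lemma set_inv_eq_image: "set_inv A = (\<lambda>x. inv x) ` A"
  by (auto simp: SET_INV_def)

lemma inv_mem_set_inv: "x \<in> A \<Longrightarrow> inv x \<in> set_inv A"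
  by (simp add: set_inv_eq_image)

lemma mem_set_inv_iff: "A \<subseteq> carrier G \<Longrightarrow> x \<in> carrier G \<Longrightarrow> x \<in> set_inv A \<longleftrightarrow> inv x \<in> A"
  by (auto simp: set_inv_eq_image image_iff subset_iff intro: bexI[of _ "inv x"])

lemma set_inv_subset: "A \<subseteq> carrier G \<Longrightarrow> set_inv A \<subseteq> carrier G"
  by (auto simp: set_inv_eq_image)

lemma set_inv_set_inv: "A \<subseteq> carrier G \<Longrightarrow> set_inv (set_inv A) = A"
  by (auto simp: set_inv_eq_image image_image subset_iff image_iff intro: bexI)

lemma card_set_inv: "A \<subseteq> carrier G \<Longrightarrow> card (set_inv A) = card A"
  unfolding set_inv_eq_image using inv_inj by (metis card_image inj_on_subset)

definition div_pairs :: "'a set \<Rightarrow> 'a set \<Rightarrow> 'a set \<Rightarrow> ('a \<times> 'a) set" where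
  "div_pairs A B D = {(c, c'). c \<in> A \<and> c' \<in> B \<and> c' \<otimes> inv c \<in> D}"

lemma div_pairs_empty [simp]:
  "div_pairs {} B D = {}" "div_pairs A {} D = {}" "div_pairs A B {} = {}"
  by (auto simp: div_pairs_def)

lemma finite_div_pairs:
  "finite (carrier G) \<Longrightarrow> A \<subseteq> carrier G \<Longrightarrow> B \<subseteq> carrier G \<Longrightarrow> finite (div_pairs A B D)"
  by (rule finite_subset[of _ "carrier G \<times> carrier G"]) (auto simp: div_pairs_def)

lemma card_div_pairs_swap:
  assumes A: "A \<subseteq> carrier G" and B: "B \<subseteq> carrier G" and D: "D \<subseteq> carrier G"
  shows "card (div_pairs B A (set_inv D)) = card (div_pairs A B D)"
proof (rule bij_betw_same_card[OF bij_betw_byWitness[where f = prod.swap and f' = prod.swap]])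
  have "c \<otimes> inv c' \<in> set_inv D \<longleftrightarrow> c' \<otimes> inv c \<in> D" if "c \<in> A" "c' \<in> B" for c c'
  proof -
    have "c \<in> carrier G" "c' \<in> carrier G" using that A B by auto
    then show ?thesis using D by (simp add: mem_set_inv_iff inv_mult_group)
  qed
  then show "prod.swap ` div_pairs B A (set_inv D) \<subseteq> div_pairs A B D"
    and "prod.swap ` div_pairs A B D \<subseteq> div_pairs B A (set_inv D)"
    by (auto simp: div_pairs_def)
qed auto

lemma card_div_pairs_rotate:
  assumes A: "A \<subseteq> carrier G" and B: "B \<subseteq> carrier G" and D: "D \<subseteq> carrier G"
  shows "card (div_pairs A B D) = card (div_pairs D (set_inv A) (set_inv B))"
proof (rule bij_betw_same_card[OF bij_betw_byWitness[where
      f = "\<lambda>(c, c'). (c' \<otimes> inv c, inv c)" and f' = "\<lambda>(d, e). (inv e, d \<otimes> inv e)"]])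
  have carr: "c \<in> carrier G" "c' \<in> carrier G" if "(c, c') \<in> div_pairs A B D" for c c'
    using that A B by (auto simp: div_pairs_def)
  have carr': "d \<in> carrier G" "e \<in> carrier G" if "(d, e) \<in> div_pairs D (set_inv A) (set_inv B)" for d e
    using that D set_inv_subset[OF A] by (auto simp: div_pairs_def)
  show "\<forall>p\<in>div_pairs A B D. (\<lambda>(d, e). (inv e, d \<otimes> inv e)) ((\<lambda>(c, c'). (c' \<otimes> inv c, inv c)) p) = p"
    using carr by (auto simp: m_assoc)
  show "\<forall>p\<in>div_pairs D (set_inv A) (set_inv B).
      (\<lambda>(c, c'). (c' \<otimes> inv c, inv c)) ((\<lambda>(d, e). (inv e, d \<otimes> inv e)) p) = p"
    using carr' by (auto simp: m_assoc)
  show "(\<lambda>(c, c'). (c' \<otimes> inv c, inv c)) ` div_pairs A B D \<subseteq> div_pairs D (set_inv A) (set_inv B)"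
  proof clarify
    fix c c' assume p: "(c, c') \<in> div_pairs A B D"
    then have "inv c \<otimes> inv (c' \<otimes> inv c) = inv c'"
      using carr[OF p] by (simp add: inv_mult_group m_assoc)
    with p show "(c' \<otimes> inv c, inv c) \<in> div_pairs D (set_inv A) (set_inv B)"
      by (auto simp: div_pairs_def inv_mem_set_inv)
  qed
  show "(\<lambda>(d, e). (inv e, d \<otimes> inv e)) ` div_pairs D (set_inv A) (set_inv B) \<subseteq> div_pairs A B D"
  proof clarify
    fix d e assume p: "(d, e) \<in> div_pairs D (set_inv A) (set_inv B)"
    then have "inv e \<in> A" "inv (e \<otimes> inv d) \<in> B"
      using carr'[OF p] A B by (auto simp: div_pairs_def mem_set_inv_iff)
    moreover have "inv (e \<otimes> inv d) = d \<otimes> inv e" "d \<otimes> inv e \<otimes> inv (inv e) = d"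
      using carr'[OF p] by (simp_all add: inv_mult_group m_assoc)
    ultimately show "(inv e, d \<otimes> inv e) \<in> div_pairs A B D"
      using p by (auto simp: div_pairs_def)
  qed
qed

end

text \<open>The \<open>n\<close>-Cayley graphs of \<open>G\<close>: \<open>G\<close> acts semiregularly on \<open>G \<times> {..<n}\<close> by right
  multiplication, and \<open>C i j\<close> is the connection set from layer \<open>i\<close> to layer \<open>j\<close>.\<close>

locale layered_cayley = group G for G :: "('a, 'b) monoid_scheme" (structure) +
  fixes n :: nat and C :: "nat \<Rightarrow> nat \<Rightarrow> 'a set"
  assumes finite_carrier: "finite (carrier G)"
    and C_subset: "C i j \<subseteq> carrier G"
    and C_swap: "i < n \<Longrightarrow> j < n \<Longrightarrow> C j i = set_inv (C i j)"
    and one_notin_C: "\<one> \<notin> C i i"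
begin

definition vertices :: "('a \<times> nat) set" where
  "vertices = carrier G \<times> {..<n}"

definition adjacent :: "'a \<times> nat \<Rightarrow> 'a \<times> nat \<Rightarrow> bool" where
  "adjacent v w \<longleftrightarrow> v \<in> vertices \<and> w \<in> vertices \<and> fst w \<otimes> inv (fst v) \<in> C (snd v) (snd w)"

lemma mem_vertices [simp]: "(g, i) \<in> vertices \<longleftrightarrow> g \<in> carrier G \<and> i < n"
  by (simp add: vertices_def)

lemma adjacent_iff:
  "adjacent (g, i) (h, j) \<longleftrightarrow> g \<in> carrier G \<and> i < n \<and> h \<in> carrier G \<and> j < n \<and> h \<otimes> inv g \<in> C i j"
  by (auto simp: adjacent_def)

lemma C_mem: "c \<in> C i j \<Longrightarrow> c \<in> carrier G"
  using C_subset by blast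

lemma simple_graph_layers: "simple_graph vertices adjacent"
proof -
  have "adjacent (h, j) (g, i)" if "adjacent (g, i) (h, j)" for g i h j
  proof -
    have "g \<in> carrier G" "h \<in> carrier G" "i < n" "j < n" "h \<otimes> inv g \<in> C i j"
      using that by (simp_all add: adjacent_iff)
    then show ?thesis
      using inv_mem_set_inv[of "h \<otimes> inv g" "C i j"] C_swap[of i j]
      by (simp add: adjacent_iff inv_mult_group)
  qed
  moreover have "\<not> adjacent (g, i) (g, i)" for g i
    using one_notin_C by (simp add: adjacent_iff)
  moreover have "adjacent v w \<Longrightarrow> v \<in> vertices \<and> w \<in> vertices" for v w
    by (simp add: adjacent_def)
  ultimately show ?thesis
    unfolding simple_graph_def split_paired_All by blast
qed

lemma neighbours_eq:
  assumes "g \<in> carrier G" "i < n"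
  shows "{w \<in> vertices. adjacent (g, i) w} = (\<lambda>(j, c). (c \<otimes> g, j)) ` (SIGMA j:{..<n}. C i j)"
proof (intro equalityI subsetI)
  fix w assume "w \<in> {w \<in> vertices. adjacent (g, i) w}"
  then obtain h j where w: "w = (h, j)" "h \<in> carrier G" "j < n" "h \<otimes> inv g \<in> C i j"
    by (cases w) (auto simp: adjacent_iff)
  then have "w = (\<lambda>(j, c). (c \<otimes> g, j)) (j, h \<otimes> inv g)"
    using assms by (simp add: m_assoc)
  with w show "w \<in> (\<lambda>(j, c). (c \<otimes> g, j)) ` (SIGMA j:{..<n}. C i j)" by blast
qed (use assms C_mem in \<open>auto simp: adjacent_iff m_assoc\<close>)

lemma card_neighbours:
  assumes "g \<in> carrier G" "i < n"
  shows "card {w \<in> vertices. adjacent (g, i) w} = (\<Sum>j<n. card (C i j))"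
proof -
  have "inj_on (\<lambda>(j, c). (c \<otimes> g, j)) (SIGMA j:{..<n}. C i j)"
    using assms C_mem by (auto simp: inj_on_def)
  moreover have "finite (C i j)" for j
    using C_subset finite_carrier by (rule finite_subset)
  ultimately show ?thesis
    by (simp add: neighbours_eq[OF assms] card_image card_SigmaI)
qed

lemma regular_graph_layers:
  assumes "\<And>i. i < n \<Longrightarrow> (\<Sum>j<n. card (C i j)) = d"
  shows "regular_graph vertices adjacent"
  using assms card_neighbours unfolding regular_graph_def vertices_def by auto

definition rtrans :: "'a \<Rightarrow> 'a \<times> nat \<Rightarrow> 'a \<times> nat" where
  "rtrans b v = (if v \<in> vertices then (fst v \<otimes> b, snd v) else v)"

lemma rtrans_apply [simp]: "g \<in> carrier G \<Longrightarrow> i < n \<Longrightarrow> rtrans b (g, i) = (g \<otimes> b, i)"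
  by (simp add: rtrans_def)

lemma graph_aut_rtrans:
  assumes b: "b \<in> carrier G"
  shows "graph_aut vertices adjacent (rtrans b)"
proof -
  have "bij_betw (rtrans b) vertices vertices"
    by (rule bij_betwI[where g = "rtrans (inv b)"])
      (use b in \<open>auto simp: rtrans_def vertices_def m_assoc\<close>)
  then show ?thesis
    using b by (auto simp: graph_aut_def rtrans_def adjacent_def)
qed

lemma rtrans_one: "rtrans \<one> = id"
  by (auto simp: rtrans_def)

lemma rtrans_mult:
  "b \<in> carrier G \<Longrightarrow> c \<in> carrier G \<Longrightarrow> rtrans (b \<otimes> c) = rtrans c \<circ> rtrans b"
  by (auto simp: rtrans_def vertices_def m_assoc)

lemma inj_on_rtrans: "1 \<le> n \<Longrightarrow> inj_on rtrans (carrier G)"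
proof (rule inj_onI)
  fix b c assume "1 \<le> n" "b \<in> carrier G" "c \<in> carrier G" "rtrans b = rtrans c"
  then have "rtrans b (\<one>, 0) = rtrans c (\<one>, 0)" by simp
  with \<open>1 \<le> n\<close> \<open>b \<in> carrier G\<close> \<open>c \<in> carrier G\<close> show "b = c" by simp
qed

context
  assumes n_pos: "1 \<le> n"
    and Aut_rtrans: "\<And>\<sigma>. graph_aut vertices adjacent \<sigma> \<Longrightarrow> \<exists>b\<in>carrier G. \<sigma> = rtrans b"
begin

lemma carrier_Aut_group_layers: "carrier (Aut_group vertices adjacent) = rtrans ` carrier G"
  using Aut_rtrans graph_aut_rtrans by (auto simp: Aut_group_def)

lemma Aut_group_layers_iso: "Aut_group vertices adjacent \<cong> G"
proof -
  have "(\<lambda>b. rtrans (inv b)) \<in> iso G (Aut_group vertices adjacent)"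
  proof (rule isoI)
    show "(\<lambda>b. rtrans (inv b)) \<in> hom G (Aut_group vertices adjacent)"
      by (rule homI) (auto simp: Aut_group_def inv_mult_group rtrans_mult graph_aut_rtrans)
    have "bij_betw (\<lambda>b. inv b) (carrier G) (carrier G)"
      by (rule bij_betwI[where g = "\<lambda>b. inv b"]) auto
    moreover have "bij_betw rtrans (carrier G) (carrier (Aut_group vertices adjacent))"
      using inj_on_rtrans[OF n_pos] by (simp add: bij_betw_def carrier_Aut_group_layers)
    ultimately show "bij_betw (\<lambda>b. rtrans (inv b)) (carrier G) (carrier (Aut_group vertices adjacent))"
      using bij_betw_trans by (fastforce simp: comp_def)
  qed
  then show ?thesis by (rule iso_sym[OF is_isoI])
qed

lemma semiregular_layers: "semiregular_on (carrier (Aut_group vertices adjacent)) vertices"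
  unfolding semiregular_on_def carrier_Aut_group_layers
proof clarify
  fix b g i assume "b \<in> carrier G" "(g, i) \<in> vertices" "rtrans b (g, i) = (g, i)"
  then have "b = \<one>" by simp
  then show "rtrans b = id" by (simp add: rtrans_one)
qed

lemma orbits_layers:
  "orbits_of (carrier (Aut_group vertices adjacent)) vertices = (\<lambda>i. carrier G \<times> {i}) ` {..<n}"
proof -
  have orbit: "{\<sigma> v |\<sigma>. \<sigma> \<in> rtrans ` carrier G} = carrier G \<times> {snd v}" if v: "v \<in> vertices" for v
  proof (intro equalityI subsetI)
    fix w assume "w \<in> carrier G \<times> {snd v}"
    then obtain h where "h \<in> carrier G" "w = (h, snd v)" by blast
    moreover obtain g where "v = (g, snd v)" "g \<in> carrier G" "snd v < n"
      using v by (metis mem_vertices prod.collapse)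
    ultimately have "inv g \<otimes> h \<in> carrier G" "w = rtrans (inv g \<otimes> h) v"
      by (metis inv_closed m_closed, metis rtrans_apply mult_inv_cancel_left)
    then show "w \<in> {\<sigma> v |\<sigma>. \<sigma> \<in> rtrans ` carrier G}" by blast
  qed (use v in \<open>auto simp: rtrans_def vertices_def\<close>)
  have "orbits_of (rtrans ` carrier G) vertices = (\<lambda>v. carrier G \<times> {snd v}) ` vertices"
    unfolding orbits_of_def using orbit by (rule image_cong[OF refl])
  also have "\<dots> = (\<lambda>i. carrier G \<times> {i}) ` {..<n}"
    using one_closed
    by (auto simp: vertices_def image_image[symmetric, of "\<lambda>i. carrier G \<times> {i}" snd] snd_image_times)
  finally show ?thesis by (simp add: carrier_Aut_group_layers)
qed

lemma card_orbits_layers: "card (orbits_of (carrier (Aut_group vertices adjacent)) vertices) = n"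
proof -
  have "inj_on (\<lambda>i. carrier G \<times> {i}) {..<n}"
    by (rule inj_onI) (use one_closed in blast)
  then show ?thesis by (simp add: orbits_layers card_image)
qed

lemma admits_mGRR_layers:
  assumes "regular_graph vertices adjacent"
  shows "admits_mGRR G n"
proof (rule admits_mGRR_of_graph)
  show "finite vertices" using finite_carrier by (simp add: vertices_def)
qed (use assms simple_graph_layers Aut_group_layers_iso semiregular_layers card_orbits_layers in auto)

end

lemma graph_aut_eq_rtrans:
  assumes \<sigma>: "graph_aut vertices adjacent \<sigma>" and b: "b \<in> carrier G"
    and layers: "\<forall>j<n. \<forall>g\<in>carrier G. \<sigma> (g, j) = (g \<otimes> b, j)"
  shows "\<sigma> = rtrans b"
proof
  fix v show "\<sigma> v = rtrans b v"
  proof (cases "v \<in> vertices")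
    case True
    then obtain g j where "v = (g, j)" "g \<in> carrier G" "j < n" by (auto simp: vertices_def)
    then show ?thesis using layers by simp
  next
    case False
    then show ?thesis using \<sigma> unfolding graph_aut_def rtrans_def by metis
  qed
qed

text \<open>The vertices \<open>(c \<otimes> g, j)\<close> and \<open>(c' \<otimes> g, l)\<close> form a triangle with \<open>(g, i)\<close> exactly when
  \<open>(c, c') \<in> div_pairs (C i j) (C i l) (C j l)\<close>.\<close>

definition layer_triangles :: "nat \<Rightarrow> nat" where
  "layer_triangles i = (\<Sum>j<n. \<Sum>l<n. card (div_pairs (C i j) (C i l) (C j l)))"

lemma triangles_at_layers:
  assumes g: "g \<in> carrier G" and i: "i < n"
  shows "triangles_at adjacent (g, i) = layer_triangles i"
proof -
  let ?Z = "SIGMA j:{..<n}. SIGMA l:{..<n}. div_pairs (C i j) (C i l) (C j l)"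
  define f :: "nat \<times> nat \<times> 'a \<times> 'a \<Rightarrow> ('a \<times> nat) \<times> ('a \<times> nat)"
    where "f = (\<lambda>(j, l, c, c'). ((c \<otimes> g, j), (c' \<otimes> g, l)))"
  have "{(u, w). adjacent (g, i) u \<and> adjacent (g, i) w \<and> adjacent u w} \<subseteq> f ` ?Z"
  proof clarify
    fix h j h' l
    assume "adjacent (g, i) (h, j)" "adjacent (g, i) (h', l)" "adjacent (h, j) (h', l)"
    then have "h \<in> carrier G" "h' \<in> carrier G" "j < n" "l < n"
      "h \<otimes> inv g \<in> C i j" "h' \<otimes> inv g \<in> C i l" "h' \<otimes> inv h \<in> C j l"
      by (simp_all add: adjacent_iff)
    moreover have "h' \<otimes> inv g \<otimes> inv (h \<otimes> inv g) = h' \<otimes> inv h"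
      using calculation g by simp
    ultimately have "(j, l, h \<otimes> inv g, h' \<otimes> inv g) \<in> ?Z"
      "((h, j), (h', l)) = f (j, l, h \<otimes> inv g, h' \<otimes> inv g)"
      using g by (simp_all add: div_pairs_def f_def m_assoc)
    then show "((h, j), (h', l)) \<in> f ` ?Z" by blast
  qed
  moreover have "f ` ?Z \<subseteq> {(u, w). adjacent (g, i) u \<and> adjacent (g, i) w \<and> adjacent u w}"
  proof (rule image_subsetI)
    fix p assume p: "p \<in> ?Z"
    obtain j l c c' where p_eq: "p = (j, l, c, c')" by (cases p)
    then have "j < n" "l < n" "c \<in> C i j" "c' \<in> C i l" "c' \<otimes> inv c \<in> C j l"
      "c \<in> carrier G" "c' \<in> carrier G"
      using p by (auto simp: div_pairs_def intro: C_mem)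
    then show "f p \<in> {(u, w). adjacent (g, i) u \<and> adjacent (g, i) w \<and> adjacent u w}"
      using g i by (simp add: p_eq f_def adjacent_iff)
  qed
  moreover have "inj_on f ?Z"
  proof (rule inj_onI)
    fix p q assume "p \<in> ?Z" "q \<in> ?Z" "f p = f q"
    moreover obtain j l c c' j' l' d d' where "p = (j, l, c, c')" "q = (j', l', d, d')"
      by (cases p, cases q)
    moreover have "c \<in> carrier G" "c' \<in> carrier G" "d \<in> carrier G" "d' \<in> carrier G"
      using calculation by (auto simp: div_pairs_def intro: C_mem)
    ultimately show "p = q" using g by (simp add: f_def)
  qed
  moreover have "finite (div_pairs (C i j) (C i l) (C j l))" for j l
    using finite_carrier C_subset C_subset by (rule finite_div_pairs)
  ultimately show ?thesis
    unfolding triangles_at_def layer_triangles_def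
    by (simp add: subset_antisym card_image card_SigmaI)
qed

lemma graph_aut_layer_triangles:
  assumes "graph_aut vertices adjacent \<sigma>" "v \<in> vertices"
  shows "layer_triangles (snd (\<sigma> v)) = layer_triangles (snd v)"
proof -
  have "\<sigma> v \<in> vertices" using assms by (rule graph_aut_mem)
  then show ?thesis
    using triangles_at_graph_aut[OF simple_graph_layers assms] assms(2)
    by (metis mem_vertices prod.collapse triangles_at_layers)
qed

lemma graph_aut_preserves_layer:
  assumes "graph_aut vertices adjacent \<sigma>" "v \<in> vertices"
    and unique: "\<And>j. j < n \<Longrightarrow> layer_triangles j = layer_triangles p \<Longrightarrow> j = p"
  shows "snd (\<sigma> v) = p \<longleftrightarrow> snd v = p"
proof -
  have "snd v < n" "snd (\<sigma> v) < n"
    using assms(2) graph_aut_mem[OF assms(1,2)] by (auto simp: vertices_def)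
  then show ?thesis
    using graph_aut_layer_triangles[OF assms(1,2)] unique by metis
qed

lemma graph_aut_restrict_layer:
  assumes \<sigma>: "graph_aut vertices adjacent \<sigma>" and p: "p < n"
    and layer: "\<And>v. v \<in> vertices \<Longrightarrow> snd (\<sigma> v) = p \<longleftrightarrow> snd v = p"
  shows "graph_aut (carrier G) (cayley_adj G (C p p)) (\<lambda>x. if x \<in> carrier G then fst (\<sigma> (x, p)) else x)"
proof -
  define \<phi> where "\<phi> x = fst (\<sigma> (x, p))" for x
  have \<sigma>_eq: "\<sigma> (x, p) = (\<phi> x, p)" and \<phi>_mem: "\<phi> x \<in> carrier G" if x: "x \<in> carrier G" for x
  proof -
    have "(x, p) \<in> vertices" using x p by simp
    then have "\<sigma> (x, p) \<in> vertices" "snd (\<sigma> (x, p)) = p"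
      using graph_aut_mem[OF \<sigma>] layer by simp_all
    then show "\<sigma> (x, p) = (\<phi> x, p)" "\<phi> x \<in> carrier G"
      by (auto simp: \<phi>_def vertices_def prod_eq_iff)
  qed
  have bij: "bij_betw \<sigma> vertices vertices" using \<sigma> by (simp add: graph_aut_def)
  have "inj_on \<phi> (carrier G)"
  proof (rule inj_onI)
    fix x y assume xy: "x \<in> carrier G" "y \<in> carrier G" "\<phi> x = \<phi> y"
    then have "\<sigma> (x, p) = \<sigma> (y, p)" by (simp add: \<sigma>_eq)
    then have "(x, p) = (y, p)"
      by (rule inj_onD[OF bij_betw_imp_inj_on[OF bij]]) (use xy p in simp_all)
    then show "x = y" by simp
  qed
  moreover have "\<phi> ` carrier G = carrier G"
  proof (intro equalityI subsetI)
    fix y assume y: "y \<in> carrier G"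
    then have "(y, p) \<in> \<sigma> ` vertices" using p bij_betw_imp_surj_on[OF bij] by simp
    then obtain v where v: "(y, p) = \<sigma> v" "v \<in> vertices" by (rule imageE)
    then have "snd v = p" using layer[OF v(2)] by (metis snd_conv)
    then obtain x where x: "v = (x, p)" by (metis prod.collapse)
    then have "x \<in> carrier G" "\<phi> x = y" using v \<sigma>_eq[of x] by simp_all
    then show "y \<in> \<phi> ` carrier G" by blast
  qed (use \<phi>_mem in auto)
  ultimately have "bij_betw \<phi> (carrier G) (carrier G)" by (simp add: bij_betw_def)
  moreover have "\<phi> y \<otimes> inv (\<phi> x) \<in> C p p \<longleftrightarrow> y \<otimes> inv x \<in> C p p"
    if "x \<in> carrier G" "y \<in> carrier G" for x y
  proof -
    have "adjacent (\<sigma> (x, p)) (\<sigma> (y, p)) \<longleftrightarrow> adjacent (x, p) (y, p)"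
      using \<sigma> that p by (simp add: graph_aut_def)
    then show ?thesis using that p \<sigma>_eq \<phi>_mem by (simp add: adjacent_iff)
  qed
  ultimately show ?thesis unfolding \<phi>_def by (rule graph_aut_cayleyI[OF C_subset])
qed

lemma graph_aut_on_layer:
  assumes \<sigma>: "graph_aut vertices adjacent \<sigma>" and p: "p < n"
    and layer: "\<And>v. v \<in> vertices \<Longrightarrow> snd (\<sigma> v) = p \<longleftrightarrow> snd v = p"
    and GRR: "\<And>f. graph_aut (carrier G) (cayley_adj G (C p p)) f \<Longrightarrow>
      \<exists>b\<in>carrier G. \<forall>x\<in>carrier G. f x = x \<otimes> b"
  shows "\<exists>b\<in>carrier G. \<forall>g\<in>carrier G. \<sigma> (g, p) = (g \<otimes> b, p)"
proof -
  obtain b where "b \<in> carrier G" "\<forall>x\<in>carrier G. fst (\<sigma> (x, p)) = x \<otimes> b"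
    using GRR[OF graph_aut_restrict_layer[OF assms(1-3)]] by auto
  moreover have "snd (\<sigma> (x, p)) = p" if "x \<in> carrier G" for x
    using layer[of "(x, p)"] that p by simp
  ultimately show ?thesis by (metis prod.collapse)
qed

lemma layer_preimage_mult_right:
  assumes \<sigma>: "graph_aut vertices adjacent \<sigma>" and b: "b \<in> carrier G" and j: "j < n"
    and on_j: "\<forall>g\<in>carrier G. \<sigma> (g, j) = (g \<otimes> b, j)"
    and v: "v \<in> vertices" "snd (\<sigma> v) = j"
  shows "snd v = j"
proof -
  obtain y where y: "\<sigma> v = (y, j)" "y \<in> carrier G"
    using graph_aut_mem[OF \<sigma> v(1)] v(2) by (metis mem_vertices prod.collapse)
  then have "\<sigma> (y \<otimes> inv b, j) = \<sigma> v"
    using on_j b by (simp add: m_assoc)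
  moreover have "(y \<otimes> inv b, j) \<in> vertices" using y b j by simp
  ultimately have "(y \<otimes> inv b, j) = v"
    using \<sigma> v(1) by (auto simp: graph_aut_def bij_betw_def inj_on_def)
  then show ?thesis by auto
qed

text \<open>A vertex \<open>(x, l)\<close> is determined by its neighbours \<open>(inv s \<otimes> x, j)\<close>, \<open>s \<in> C j l\<close>, as soon
  as no \<open>w \<noteq> \<one>\<close> satisfies \<open>w \<otimes> C j l \<subseteq> C j l\<close>.\<close>

lemma mult_right_next_layer:
  assumes \<sigma>: "graph_aut vertices adjacent \<sigma>" and b: "b \<in> carrier G" and j: "j < n" and l: "l < n"
    and on_j: "\<forall>g\<in>carrier G. \<sigma> (g, j) = (g \<otimes> b, j)"
    and to_l: "\<forall>g\<in>carrier G. snd (\<sigma> (g, l)) = l"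
    and stab: "\<And>w. w \<in> carrier G \<Longrightarrow> (\<forall>s\<in>C j l. w \<otimes> s \<in> C j l) \<Longrightarrow> w = \<one>"
  shows "\<forall>x\<in>carrier G. \<sigma> (x, l) = (x \<otimes> b, l)"
proof
  fix x assume x: "x \<in> carrier G"
  obtain x' where x': "\<sigma> (x, l) = (x', l)" "x' \<in> carrier G"
    using graph_aut_mem[OF \<sigma>, of "(x, l)"] to_l x l by (metis mem_vertices prod.collapse)
  define w where "w = x' \<otimes> inv b \<otimes> inv x"
  have w: "w \<in> carrier G" using x x'(2) b by (simp add: w_def)
  have "w \<otimes> s \<in> C j l" if s: "s \<in> C j l" for s
  proof -
    have sc: "s \<in> carrier G" using s by (rule C_mem)
    have "adjacent (inv s \<otimes> x, j) (x, l)"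
      using s sc x j l by (simp add: adjacent_iff inv_mult_group m_assoc)
    then have "adjacent (\<sigma> (inv s \<otimes> x, j)) (\<sigma> (x, l))"
      using \<sigma> sc x j l by (simp add: graph_aut_def)
    then have "x' \<otimes> inv (inv s \<otimes> x \<otimes> b) \<in> C j l"
      using on_j sc x x' by (simp add: adjacent_iff)
    moreover have "x' \<otimes> inv (inv s \<otimes> x \<otimes> b) = w \<otimes> s"
      using sc x x'(2) b by (simp add: w_def inv_mult_group m_assoc)
    ultimately show ?thesis by simp
  qed
  then have "w = \<one>" using stab w by blast
  then have "x' = x \<otimes> b"
    using x x'(2) b by (simp add: w_def m_assoc inv_solve_right' inv_mult_group[symmetric])
  then show "\<sigma> (x, l) = (x \<otimes> b, l)" using x' by simp
qed

end

section \<open>A cycle of copies of a GRR\<close>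

lemma add_mod_eq_add_mod_iff:
  fixes i k l m :: nat
  assumes "k < m" "l < m"
  shows "(i + k) mod m = (i + l) mod m \<longleftrightarrow> k = l"
proof
  have dvd_less: "x = 0" if "m dvd x" "x < m" for x
    using that nat_dvd_not_less by blast
  assume eq: "(i + k) mod m = (i + l) mod m"
  show "k = l"
  proof (cases "l \<le> k")
    case True
    then have "m dvd k - l" using eq mod_eq_dvd_iff_nat[of "i + l" "i + k" m] by simp
    moreover have "k - l < m" using assms by linarith
    ultimately show ?thesis using True dvd_less by fastforce
  next
    case False
    then have "m dvd l - k" using eq mod_eq_dvd_iff_nat[of "i + k" "i + l" m] by simp
    moreover have "l - k < m" using assms by linarith
    ultimately show ?thesis using False dvd_less by fastforce
  qed
qed simp

lemma ex_add_mod_eq: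
  fixes i j m :: nat
  assumes "i < m" "j < m"
  shows "\<exists>k<m. (i + k) mod m = j"
proof
  have "(i + (j + m - i) mod m) mod m = (i + (j + m - i)) mod m" by (simp add: mod_add_right_eq)
  also have "\<dots> = j" using assms by simp
  finally show "(j + m - i) mod m < m \<and> (i + (j + m - i) mod m) mod m = j" using assms by simp
qed

locale GRR_cycle = cayley_GRR +
  fixes a r :: 'a and m :: nat
  assumes a_mem: "a \<in> carrier G" and r_mem_R: "r \<in> R"
    and conj_notin_R: "a \<otimes> r \<otimes> inv a \<notin> R"
    and m_pos: "1 \<le> m"
begin

definition nx :: "nat \<Rightarrow> nat" where
  "nx i = (i + 1) mod m"

definition pv :: "nat \<Rightarrow> nat" where
  "pv i = (i + (m - 1)) mod m"

lemma nx_lt: "nx i < m"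
  using m_pos by (simp add: nx_def)

lemma pv_lt: "pv i < m"
  using m_pos by (simp add: pv_def)

lemma nx_pv: "i < m \<Longrightarrow> nx (pv i) = i"
proof -
  assume "i < m"
  have "nx (pv i) = (i + (m - 1) + 1) mod m" by (simp only: nx_def pv_def mod_add_left_eq)
  also have "\<dots> = i" using m_pos \<open>i < m\<close> by simp
  finally show ?thesis .
qed

lemma pv_nx: "i < m \<Longrightarrow> pv (nx i) = i"
proof -
  assume "i < m"
  have "pv (nx i) = (i + 1 + (m - 1)) mod m" by (simp only: nx_def pv_def mod_add_left_eq)
  also have "\<dots> = i" using m_pos \<open>i < m\<close> by simp
  finally show ?thesis .
qed

lemma nx_nx: "nx (nx i) = (i + 2) mod m"
  by (simp only: nx_def mod_add_left_eq add.assoc one_add_one)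

lemma nx_pv_one_layer: "m = 1 \<Longrightarrow> nx i = 0 \<and> pv i = 0"
  unfolding nx_def pv_def by simp

lemma nx_neq: "2 \<le> m \<Longrightarrow> i < m \<Longrightarrow> nx i \<noteq> i"
  using add_mod_eq_add_mod_iff[where m = m and i = i and k = 1 and l = 0] by (simp add: nx_def)

lemma pv_neq: "2 \<le> m \<Longrightarrow> i < m \<Longrightarrow> pv i \<noteq> i"
  using add_mod_eq_add_mod_iff[where m = m and i = i and k = "m - 1" and l = 0] by (simp add: pv_def)

lemma pv_neq_nx: "3 \<le> m \<Longrightarrow> i < m \<Longrightarrow> pv i \<noteq> nx i"
  using add_mod_eq_add_mod_iff[where m = m and i = i and k = "m - 1" and l = 1]
  by (simp add: pv_def nx_def)

lemma nx_nx_neq: "3 \<le> m \<Longrightarrow> i < m \<Longrightarrow> nx (nx i) \<noteq> i"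
  using add_mod_eq_add_mod_iff[where m = m and i = i and k = 2 and l = 0] by (simp add: nx_nx)

lemma nx_nx_neq_pv: "4 \<le> m \<Longrightarrow> i < m \<Longrightarrow> nx (nx i) \<noteq> pv i"
  using add_mod_eq_add_mod_iff[where m = m and i = i and k = 2 and l = "m - 1"]
  by (simp add: nx_nx pv_def)

lemma pv_eq_nx: "m = 2 \<Longrightarrow> pv i = nx i"
  unfolding pv_def nx_def by simp

lemma pv_eq_nx_nx: "m = 3 \<Longrightarrow> pv i = nx (nx i)"
  unfolding pv_def nx_nx by simp

definition T :: "'a set" where
  "T = {\<one>, a, a \<otimes> r}"

text \<open>Using \<open>T\<inverse>\<close> at layer 1 breaks the rotational symmetry of the cycle of layers.\<close>

definition S :: "nat \<Rightarrow> 'a set" where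
  "S i = (if i = 1 then set_inv T else T)"

definition C :: "nat \<Rightarrow> nat \<Rightarrow> 'a set" where
  "C i j = (if i = j then R else if j = nx i then S i else if i = nx j then set_inv (S j) else {})"

lemma r_mem: "r \<in> carrier G"
  using r_mem_R R_subset by blast

lemma T_subset: "T \<subseteq> carrier G"
  using a_mem r_mem by (simp add: T_def)

lemma S_subset: "S i \<subseteq> carrier G"
  using T_subset set_inv_subset by (simp add: S_def)

lemma set_inv_R: "set_inv R = R"
proof (intro equalityI subsetI)
  fix x assume "x \<in> R"
  then have "inv (inv x) \<in> set_inv R" using inv_R by (intro inv_mem_set_inv)
  then show "x \<in> set_inv R" using \<open>x \<in> R\<close> R_subset by auto
qed (use inv_R in \<open>auto simp: set_inv_eq_image\<close>)

lemma C_swap_cycle: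
  assumes i: "i < m" and j: "j < m"
  shows "C j i = set_inv (C i j)"
proof (cases "i = j")
  case True
  then show ?thesis using set_inv_R by (simp add: C_def)
next
  case False
  consider "j = nx i" "i = nx j" | "j = nx i" "i \<noteq> nx j" | "j \<noteq> nx i" "i = nx j"
    | "j \<noteq> nx i" "i \<noteq> nx j" by blast
  then show ?thesis
  proof cases
    case 1
    have "nx (nx i) = i" using 1 by metis
    then have "\<not> 3 \<le> m" using nx_nx_neq[of i] i by auto
    moreover have "m \<noteq> 1" using i j False by auto
    ultimately have "m = 2" using m_pos by linarith
    then have "i = 1 \<and> j = 0 \<or> i = 0 \<and> j = 1" using i j False by auto
    then have "S j = set_inv (S i)" using set_inv_set_inv[OF T_subset] by (auto simp: S_def)
    moreover have "C i j = S i" using 1(1) False by (simp add: C_def)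
    moreover have "C j i = S j" using 1(2) False by (simp add: C_def)
    ultimately show ?thesis by simp
  next
    case 2
    then show ?thesis using False by (simp add: C_def)
  next
    case 3
    then show ?thesis using False set_inv_set_inv[OF S_subset] by (simp add: C_def)
  next
    case 4
    then show ?thesis using False by (simp add: C_def SET_INV_def)
  qed
qed

sublocale layered_cayley G m C
proof
  show "C i j \<subseteq> carrier G" for i j
    using R_subset S_subset set_inv_subset[OF S_subset] by (simp add: C_def)
  show "\<one> \<notin> C i i" for i
    using one_notin_R by (simp add: C_def)
  show "C j i = set_inv (C i j)" if "i < m" "j < m" for i j
    using that by (rule C_swap_cycle)
qed (rule finite_carrier)

lemma C_diag [simp]: "C i i = R"
  by (simp add: C_def)

lemma C_nx: "2 \<le> m \<Longrightarrow> i < m \<Longrightarrow> C i (nx i) = S i"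
  using nx_neq[of i] by (auto simp: C_def)

lemma C_pv: "3 \<le> m \<Longrightarrow> i < m \<Longrightarrow> C i (pv i) = set_inv (S (pv i))"
  using pv_neq[of i] pv_neq_nx[of i] nx_pv[of i] by (auto simp: C_def)

lemma C_empty: "j < m \<Longrightarrow> j \<notin> {i, nx i, pv i} \<Longrightarrow> C i j = {}"
  using pv_nx[of j] by (auto simp: C_def)

lemma sum_layers:
  assumes "i < m" and "\<And>j. j < m \<Longrightarrow> j \<notin> {i, nx i, pv i} \<Longrightarrow> f j = 0"
  shows "(\<Sum>j<m. f j) = (\<Sum>j\<in>{i, nx i, pv i}. f j)"
  by (rule sum.mono_neutral_right) (use assms nx_lt pv_lt in auto)

lemma card_S: "card (S i) = card T"
  using card_set_inv[OF T_subset] by (simp add: S_def)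

lemma regular_graph_cycle: "regular_graph vertices adjacent"
proof (rule regular_graph_layers)
  fix i assume i: "i < m"
  have "(\<Sum>j<m. card (C i j)) = (\<Sum>j\<in>{i, nx i, pv i}. card (C i j))"
    using i by (intro sum_layers) (simp_all add: C_empty)
  also have "\<dots> = card R + card T * min 2 (m - 1)"
  proof (cases "m \<le> 2")
    case True
    then consider "m = 1" | "m = 2" using m_pos by linarith
    then show ?thesis
    proof cases
      case 1
      with i have "i = 0" "nx i = 0" "pv i = 0" "min 2 (m - 1) = 0" using nx_pv_one_layer by simp_all
      then show ?thesis by simp
    next
      case 2
      then have "nx i \<noteq> i" "pv i = nx i" "C i (nx i) = S i" "min 2 (m - 1) = 1"
        using i nx_neq[of i] pv_eq_nx C_nx[of i] by simp_all
      then show ?thesis using card_S by simp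
    qed
  next
    case False
    then show ?thesis
      using i nx_neq[of i] pv_neq[of i] pv_neq_nx[of i] C_nx[of i] C_pv[of i]
        card_S card_set_inv[OF S_subset] by simp
  qed
  finally show "(\<Sum>j<m. card (C i j)) = card R + card T * min 2 (m - 1)" .
qed


definition R_pairs :: "'a set \<Rightarrow> nat" where
  "R_pairs Q = card (div_pairs Q Q R)"

lemma card_div_pairs_layers:
  assumes "i < m" "j < m"
  shows "card (div_pairs (C i i) (C i j) (C i j)) = R_pairs (set_inv (C i j))"
    and "card (div_pairs (C i j) (C i i) (C j i)) = R_pairs (set_inv (C i j))"
    and "card (div_pairs (C i j) (C i j) (C j j)) = R_pairs (C i j)"
proof -
  have Cij: "C i j \<subseteq> carrier G" by (rule C_subset)
  have "card (div_pairs (C i j) R (set_inv (C i j))) = R_pairs (set_inv (C i j))"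
    using card_div_pairs_rotate[OF Cij R_subset set_inv_subset[OF Cij]]
    by (simp add: set_inv_R R_pairs_def)
  moreover have "card (div_pairs R (C i j) (C i j)) = card (div_pairs (C i j) R (set_inv (C i j)))"
    using card_div_pairs_rotate[OF R_subset Cij Cij] by (simp add: set_inv_R)
  ultimately show "card (div_pairs (C i i) (C i j) (C i j)) = R_pairs (set_inv (C i j))"
    and "card (div_pairs (C i j) (C i i) (C j i)) = R_pairs (set_inv (C i j))"
    using C_swap[OF assms] by simp_all
  show "card (div_pairs (C i j) (C i j) (C j j)) = R_pairs (C i j)"
    by (simp add: R_pairs_def)
qed

lemma card_div_pairs_cross:
  assumes "j < m" "l < m"
  shows "card (div_pairs (C i l) (C i j) (C l j)) = card (div_pairs (C i j) (C i l) (C j l))"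
  using card_div_pairs_swap[OF C_subset C_subset C_subset] C_swap[OF assms] by simp

definition cross_triangles :: "nat \<Rightarrow> nat" where
  "cross_triangles i = card (div_pairs (C i (nx i)) (C i (pv i)) (C (nx i) (pv i)))"

lemma layer_triangles_local:
  assumes i: "i < m"
  shows "layer_triangles i =
    (\<Sum>j\<in>{i, nx i, pv i}. \<Sum>l\<in>{i, nx i, pv i}. card (div_pairs (C i j) (C i l) (C j l)))"
proof -
  have "(\<Sum>l<m. card (div_pairs (C i j) (C i l) (C j l)))
      = (\<Sum>l\<in>{i, nx i, pv i}. card (div_pairs (C i j) (C i l) (C j l)))" for j
    using i by (intro sum_layers) (simp_all add: C_empty)
  moreover have "(\<Sum>j<m. \<Sum>l<m. card (div_pairs (C i j) (C i l) (C j l)))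
      = (\<Sum>j\<in>{i, nx i, pv i}. \<Sum>l<m. card (div_pairs (C i j) (C i l) (C j l)))"
    using i by (intro sum_layers) (simp_all add: C_empty)
  ultimately show ?thesis by (simp add: layer_triangles_def)
qed

lemma layer_triangles_cycle:
  assumes i: "i < m" and m: "2 \<le> m"
  shows "layer_triangles i = card (div_pairs R R R)
    + R_pairs (C i (nx i)) + 2 * R_pairs (set_inv (C i (nx i)))
    + (if m = 2 then 0
       else R_pairs (C i (pv i)) + 2 * R_pairs (set_inv (C i (pv i))) + 2 * cross_triangles i)"
proof -
  define F where "F j l = card (div_pairs (C i j) (C i l) (C j l))" for j l
  have sum_eq: "layer_triangles i = (\<Sum>j\<in>{i, nx i, pv i}. \<Sum>l\<in>{i, nx i, pv i}. F j l)"
    unfolding F_def by (rule layer_triangles_local[OF i])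
  have diag: "F i i = card (div_pairs R R R)" by (simp add: F_def)
  have pair: "F i j + F j i + F j j = R_pairs (C i j) + 2 * R_pairs (set_inv (C i j))"
    if "j < m" for j
    using card_div_pairs_layers[OF i that] by (simp add: F_def)
  have cross: "F (pv i) (nx i) = cross_triangles i" "F (nx i) (pv i) = cross_triangles i"
    using card_div_pairs_cross nx_lt pv_lt by (simp_all add: F_def cross_triangles_def)
  have n: "nx i \<noteq> i" using nx_neq[OF m i] .
  show ?thesis
  proof (cases "m = 2")
    case True
    then have "pv i = nx i" by (rule pv_eq_nx)
    then have "layer_triangles i = F i i + (F i (nx i) + F (nx i) i + F (nx i) (nx i))"
      using sum_eq n by (simp add: algebra_simps)
    then show ?thesis using diag pair[of "nx i", OF nx_lt] True by simp
  next
    case False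
    then have "pv i \<noteq> i" "pv i \<noteq> nx i" using m pv_neq[OF m i] pv_neq_nx[of i] i by auto
    then have "layer_triangles i = F i i + (F i (nx i) + F (nx i) i + F (nx i) (nx i))
        + (F i (pv i) + F (pv i) i + F (pv i) (pv i)) + F (nx i) (pv i) + F (pv i) (nx i)"
      using sum_eq n by (simp add: algebra_simps)
    then show ?thesis using diag pair[of "nx i", OF nx_lt] pair[of "pv i", OF pv_lt] cross False by simp
  qed
qed

lemma cross_triangles_zero: "4 \<le> m \<Longrightarrow> i < m \<Longrightarrow> cross_triangles i = 0"
  using pv_neq_nx[of i] nx_nx_neq_pv[of i] pv_nx[of i] pv_neq[of i] pv_lt[of i]
  by (simp add: cross_triangles_def C_empty)

text \<open>For three layers, the cross triangles at layer \<open>nx i\<close> are the cross triangles at layer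
  \<open>i\<close> seen from another corner.\<close>

lemma cross_triangles_nx:
  assumes m: "m = 3" and i: "i < m"
  shows "cross_triangles (nx i) = cross_triangles i"
proof -
  have "nx (nx i) = pv i" "pv (nx i) = i" using pv_eq_nx_nx[OF m] pv_nx[OF i] by simp_all
  then have "cross_triangles (nx i) = card (div_pairs (C (nx i) (pv i)) (C (nx i) i) (C (pv i) i))"
    by (simp add: cross_triangles_def)
  also have "\<dots> = cross_triangles i"
    using card_div_pairs_rotate[OF C_subset C_subset C_subset, of i "nx i" i "pv i" "nx i" "pv i"]
      C_swap[OF i nx_lt] C_swap[OF i pv_lt] by (simp add: cross_triangles_def)
  finally show ?thesis .
qed

lemma cross_triangles_const:
  assumes "3 \<le> m" "i < m"
  shows "cross_triangles i = cross_triangles 0"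
  using assms(2)
proof (induction i)
  case (Suc i)
  then have "nx i = Suc i" by (simp add: nx_def)
  then show ?case
    using Suc cross_triangles_nx[of i] cross_triangles_zero[of i] cross_triangles_zero[of "Suc i"]
      assms(1)
    by (cases "m = 3") auto
qed simp

lemma a_neq_one: "a \<noteq> \<one>"
  using conj_notin_R r_mem r_mem_R by auto

lemma a_neq_ar: "a \<noteq> a \<otimes> r"
  using a_mem r_mem r_mem_R one_notin_R by (metis l_cancel_one')

lemma ar_neq_one: "a \<otimes> r \<noteq> \<one>"
proof
  assume "a \<otimes> r = \<one>"
  then have "a \<otimes> r \<otimes> inv a = r"
    using a_mem r_mem by (metis inv_equality l_one m_assoc r_one inv_closed r_inv)
  then show False using conj_notin_R r_mem_R by simp
qed

lemma right_quots_notin_R: "a \<otimes> r \<otimes> inv a \<notin> R" "a \<otimes> inv (a \<otimes> r) \<notin> R"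
proof -
  have "a \<otimes> inv (a \<otimes> r) = inv (a \<otimes> r \<otimes> inv a)"
    using a_mem r_mem by (simp add: inv_mult_group m_assoc)
  then show "a \<otimes> r \<otimes> inv a \<notin> R" "a \<otimes> inv (a \<otimes> r) \<notin> R"
    using conj_notin_R inv_mem_R_iff a_mem r_mem by simp_all
qed

lemma left_quot_T:
  assumes s: "s \<in> T" and s': "s' \<in> T"
  shows "inv s \<otimes> s' \<in> R \<longleftrightarrow> s' \<otimes> inv s \<in> R \<or> (s, s') \<in> {(a, a \<otimes> r), (a \<otimes> r, a)}"
proof -
  have carr: "s \<in> carrier G" "s' \<in> carrier G" using s s' T_subset by auto
  consider "s = s'" | "s = \<one>" | "s' = \<one>" | "s = a" "s' = a \<otimes> r" | "s = a \<otimes> r" "s' = a"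
    using s s' by (auto simp: T_def)
  then show ?thesis
  proof cases
    case 1
    then show ?thesis using carr one_notin_R a_neq_ar by auto
  next
    case 2
    then show ?thesis using carr a_neq_one ar_neq_one by auto
  next
    case 3
    then show ?thesis using carr a_neq_one ar_neq_one by auto
  next
    case 4
    then show ?thesis using a_mem r_mem r_mem_R by simp
  next
    case 5
    then have "inv s \<otimes> s' = inv r" using a_mem r_mem by (simp add: inv_mult_group m_assoc)
    then show ?thesis using 5 inv_R[OF r_mem_R] by simp
  qed
qed

lemma R_pairs_set_inv:
  assumes Q: "Q \<subseteq> carrier G"
  shows "R_pairs (set_inv Q) = card {(s, s'). s \<in> Q \<and> s' \<in> Q \<and> inv s \<otimes> s' \<in> R}"
proof -
  let ?L = "{(s, s'). s \<in> Q \<and> s' \<in> Q \<and> inv s \<otimes> s' \<in> R}"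
  have quot: "inv t' \<otimes> inv (inv t) \<in> R \<longleftrightarrow> inv t \<otimes> t' \<in> R" if "t \<in> Q" "t' \<in> Q" for t t'
  proof -
    have "t \<in> carrier G" "t' \<in> carrier G" using that Q by auto
    then show ?thesis using inv_mem_R_iff[of "inv t' \<otimes> t"] by (simp add: inv_mult_group)
  qed
  have "div_pairs (set_inv Q) (set_inv Q) R = map_prod (\<lambda>x. inv x) (\<lambda>x. inv x) ` ?L"
  proof (intro equalityI subsetI)
    fix p assume "p \<in> div_pairs (set_inv Q) (set_inv Q) R"
    then obtain t t' where "p = (inv t, inv t')" "t \<in> Q" "t' \<in> Q" "inv t' \<otimes> inv (inv t) \<in> R"
      by (auto simp: div_pairs_def set_inv_eq_image)
    then show "p \<in> map_prod (\<lambda>x. inv x) (\<lambda>x. inv x) ` ?L" using quot by auto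
  next
    fix p assume "p \<in> map_prod (\<lambda>x. inv x) (\<lambda>x. inv x) ` ?L"
    then obtain t t' where "p = (inv t, inv t')" "t \<in> Q" "t' \<in> Q" "inv t \<otimes> t' \<in> R"
      by auto
    then show "p \<in> div_pairs (set_inv Q) (set_inv Q) R"
      using quot by (auto simp: div_pairs_def inv_mem_set_inv)
  qed
  moreover have "inj_on (map_prod (\<lambda>x. inv x) (\<lambda>x. inv x)) ?L"
    using inv_inj Q by (auto simp: inj_on_def)
  ultimately show ?thesis by (simp add: R_pairs_def card_image)
qed

lemma R_pairs_set_inv_T: "R_pairs (set_inv T) = R_pairs T + 2"
proof -
  have "{(s, s'). s \<in> T \<and> s' \<in> T \<and> inv s \<otimes> s' \<in> R} = div_pairs T T R \<union> {(a, a \<otimes> r), (a \<otimes> r, a)}"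
    using left_quot_T by (auto simp: div_pairs_def T_def)
  moreover have "div_pairs T T R \<inter> {(a, a \<otimes> r), (a \<otimes> r, a)} = {}"
    using right_quots_notin_R by (auto simp: div_pairs_def)
  moreover have "finite (div_pairs T T R)"
    using finite_carrier T_subset T_subset by (rule finite_div_pairs)
  ultimately show ?thesis
    using a_neq_ar R_pairs_set_inv[OF T_subset] by (simp add: R_pairs_def card_Un_disjoint)
qed

lemma pv_one: "2 \<le> m \<Longrightarrow> pv 1 = 0"
  unfolding pv_def by simp

lemma nx_one: "3 \<le> m \<Longrightarrow> nx 1 = 2"
  unfolding nx_def by simp

lemma pv_eq_one_iff: "3 \<le> m \<Longrightarrow> i < m \<Longrightarrow> pv i = 1 \<longleftrightarrow> i = 2"
  using nx_pv[of i] pv_nx[of 1] nx_one by auto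

lemma layer_triangles_two:
  assumes m: "m = 2" and i: "i < m"
  shows "layer_triangles i = card (div_pairs R R R) + 3 * R_pairs T + (if i = 0 then 4 else 2)"
proof -
  have "layer_triangles i = card (div_pairs R R R) + R_pairs (S i) + 2 * R_pairs (set_inv (S i))"
    using layer_triangles_cycle[OF i] C_nx[OF _ i] m by simp
  moreover have "i = 0 \<or> i = 1" using i m by auto
  ultimately show ?thesis
    using R_pairs_set_inv_T set_inv_set_inv[OF T_subset] by (auto simp: S_def)
qed

lemma layer_triangles_three:
  assumes m: "3 \<le> m" and i: "i < m"
  shows "layer_triangles i = card (div_pairs R R R) + 2 * cross_triangles 0 + 6 * R_pairs T
    + (if i = 1 then 4 else if i = 2 then 8 else 6)"
proof -
  have "layer_triangles i = card (div_pairs R R R) + 2 * cross_triangles 0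
      + R_pairs (S i) + 2 * R_pairs (set_inv (S i))
      + R_pairs (set_inv (S (pv i))) + 2 * R_pairs (S (pv i))"
    using layer_triangles_cycle[OF i] C_nx[OF _ i] C_pv[OF m i] m cross_triangles_const[OF m i]
      set_inv_set_inv[OF S_subset] by simp
  moreover have "pv i = 0" if "i = 1" using that pv_one m by simp
  moreover have "pv i = 1 \<longleftrightarrow> i = 2" using pv_eq_one_iff[OF m i] .
  ultimately show ?thesis
    using R_pairs_set_inv_T set_inv_set_inv[OF T_subset] by (auto simp: S_def)
qed

lemma layer_triangles_unique:
  assumes m: "2 \<le> m" and p: "p = 1 \<or> p = nx 1" and j: "j < m"
    and eq: "layer_triangles j = layer_triangles p"
  shows "j = p"
proof (cases "m = 2")
  case True
  then have "nx 1 = 0" unfolding nx_def by simp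
  then show ?thesis
    using p j eq True layer_triangles_two[OF True] by (cases "j = 0") auto
next
  case False
  then have m3: "3 \<le> m" using m by linarith
  then show ?thesis
    using p j eq layer_triangles_three[OF m3] nx_one[OF m3] by (auto split: if_splits)
qed

lemma r_notin_T: "r \<notin> T"
  using one_notin_R r_mem_R conj_notin_R a_neq_one a_mem r_mem by (auto simp: T_def m_assoc)

lemma T_left_stabiliser:
  assumes w: "w \<in> carrier G" and stab: "\<forall>s\<in>T. w \<otimes> s \<in> T"
  shows "w = \<one>"
proof -
  have ar: "a \<otimes> r \<in> carrier G" using a_mem r_mem by simp
  have a_neq_r: "a \<noteq> r" using conj_notin_R r_mem_R a_mem by (auto simp: m_assoc)
  have "w \<in> T" using stab w by (metis T_def insertI1 r_one)
  then consider "w = \<one>" | "w = a" | "w = a \<otimes> r" by (auto simp: T_def)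
  then show ?thesis
  proof cases
    case 2
    then have aa: "a \<otimes> a \<in> T" "a \<otimes> (a \<otimes> r) \<in> T" using stab by (auto simp: T_def)
    then consider "a \<otimes> a = \<one>" | "a \<otimes> a = a" | "a \<otimes> a = a \<otimes> r" by (auto simp: T_def)
    then show ?thesis
    proof cases
      case 1
      then have "a \<otimes> (a \<otimes> r) = r" using a_mem r_mem by (simp add: m_assoc[symmetric])
      then show ?thesis using aa r_notin_T by simp
    qed (use a_mem r_mem a_neq_one a_neq_r in auto)
  next
    case 3
    then have ara: "a \<otimes> r \<otimes> a \<in> T" "a \<otimes> r \<otimes> (a \<otimes> r) \<in> T" using stab by (auto simp: T_def)
    then consider "a \<otimes> r \<otimes> a = \<one>" | "a \<otimes> r \<otimes> a = a" | "a \<otimes> r \<otimes> a = a \<otimes> r"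
      by (auto simp: T_def)
    then show ?thesis
    proof cases
      case 1
      then have "a \<otimes> r \<otimes> (a \<otimes> r) = r" using a_mem r_mem by (simp add: m_assoc[symmetric])
      then show ?thesis using ara r_notin_T by simp
    qed (use a_mem ar a_neq_one ar_neq_one in auto)
  qed
qed

lemma one_mem_S: "\<one> \<in> S i"
  using inv_mem_set_inv[of \<one> T] by (simp add: S_def T_def)

lemma mult_right_propagates:
  assumes \<sigma>: "graph_aut vertices adjacent \<sigma>" and m: "2 \<le> m" and b: "b \<in> carrier G"
    and j: "j < m" and j1: "j \<noteq> 1"
    and on_j: "\<forall>g\<in>carrier G. \<sigma> (g, j) = (g \<otimes> b, j)"
    and prev: "\<forall>v\<in>vertices. snd (\<sigma> v) = pv j \<longrightarrow> snd v = pv j"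
  shows "\<forall>g\<in>carrier G. \<sigma> (g, nx j) = (g \<otimes> b, nx j)"
proof (rule mult_right_next_layer[OF \<sigma> b j nx_lt on_j])
  show "\<forall>g\<in>carrier G. snd (\<sigma> (g, nx j)) = nx j"
  proof
    fix g assume g: "g \<in> carrier G"
    have v: "(g, nx j) \<in> vertices" using g nx_lt by simp
    obtain h l where hl: "\<sigma> (g, nx j) = (h, l)" "l < m"
      using graph_aut_mem[OF \<sigma> v] by (metis mem_vertices prod.collapse)
    have "adjacent (g, j) (g, nx j)"
      using g j nx_lt C_nx[OF m j] one_mem_S by (simp add: adjacent_iff)
    then have "adjacent (\<sigma> (g, j)) (\<sigma> (g, nx j))"
      using graph_aut_adj[OF \<sigma>] g j v by simp
    then have "adjacent (g \<otimes> b, j) (h, l)" using on_j g hl(1) by simp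
    then have "C j l \<noteq> {}" by (auto simp: adjacent_iff)
    then have "l \<in> {j, nx j, pv j}" using C_empty hl(2) by blast
    moreover have "l \<noteq> j"
      using layer_preimage_mult_right[OF \<sigma> b j on_j v] hl(1) nx_neq[OF m j] by auto
    moreover have "l = nx j" if "l = pv j"
      using prev[rule_format, OF v] hl(1) that by simp
    ultimately show "snd (\<sigma> (g, nx j)) = nx j" using hl(1) by auto
  qed
  show "w = \<one>" if "w \<in> carrier G" "\<forall>s\<in>C j (nx j). w \<otimes> s \<in> C j (nx j)" for w
    using that T_left_stabiliser C_nx[OF m j] j1 by (simp add: S_def)
qed

lemma mult_right_all_layers:
  assumes \<sigma>: "graph_aut vertices adjacent \<sigma>" and m: "2 \<le> m" and b: "b \<in> carrier G"
    and on_start: "\<forall>g\<in>carrier G. \<sigma> (g, nx 1) = (g \<otimes> b, nx 1)"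
    and layer1: "\<forall>v\<in>vertices. snd (\<sigma> v) = 1 \<longrightarrow> snd v = 1"
  shows "\<forall>j<m. \<forall>g\<in>carrier G. \<sigma> (g, j) = (g \<otimes> b, j)"
proof -
  let ?j = "\<lambda>k. (nx 1 + k) mod m"
  have "(\<forall>g\<in>carrier G. \<sigma> (g, ?j k) = (g \<otimes> b, ?j k))
      \<and> (\<forall>v\<in>vertices. snd (\<sigma> v) = pv (?j k) \<longrightarrow> snd v = pv (?j k))" if "k < m" for k
    using that
  proof (induction k)
    case 0
    then show ?case using on_start layer1 nx_lt pv_nx[of 1] m by simp
  next
    case (Suc k)
    have j: "?j k < m" using m by simp
    have "?j k \<noteq> pv (nx 1)"
      using add_mod_eq_add_mod_iff[where m = m and i = "nx 1" and k = k and l = "m - 1"] Suc.prems nx_lt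
      by (simp add: pv_def)
    then have j1: "?j k \<noteq> 1" using pv_nx[of 1] m by simp
    have "nx (?j k) = (nx 1 + k + 1) mod m" unfolding nx_def[of "?j k"] by (rule mod_add_left_eq)
    then have nx_j: "nx (?j k) = ?j (Suc k)" by simp
    have on_j: "\<forall>g\<in>carrier G. \<sigma> (g, ?j k) = (g \<otimes> b, ?j k)" using Suc by simp
    then have "\<forall>v\<in>vertices. snd (\<sigma> v) = ?j k \<longrightarrow> snd v = ?j k"
      using layer_preimage_mult_right[OF \<sigma> b j] by blast
    then show ?case
      using mult_right_propagates[OF \<sigma> m b j j1 on_j] Suc pv_nx[OF j] nx_j by simp
  qed
  moreover have "\<exists>k<m. ?j k = j" if "j < m" for j
    using ex_add_mod_eq[OF nx_lt that] .
  ultimately show ?thesis by metis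
qed

lemma graph_aut_cycle_eq_rtrans:
  assumes \<sigma>: "graph_aut vertices adjacent \<sigma>"
  shows "\<exists>b\<in>carrier G. \<sigma> = rtrans b"
proof -
  have GRR: "\<And>f. graph_aut (carrier G) (cayley_adj G (C p p)) f \<Longrightarrow>
      \<exists>b\<in>carrier G. \<forall>x\<in>carrier G. f x = x \<otimes> b" for p
    using graph_aut_is_mult_right by simp
  show ?thesis
  proof (cases "m = 1")
    case True
    have "snd (\<sigma> v) = 0 \<longleftrightarrow> snd v = 0" if "v \<in> vertices" for v
    proof -
      have "snd v < m" "snd (\<sigma> v) < m"
        using graph_aut_mem[OF \<sigma> that] that by (auto simp: vertices_def)
      then show ?thesis using \<open>m = 1\<close> by simp
    qed
    then have "\<exists>b\<in>carrier G. \<forall>g\<in>carrier G. \<sigma> (g, 0) = (g \<otimes> b, 0)"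
      using m_pos by (intro graph_aut_on_layer[OF \<sigma> _ _ GRR]) simp_all
    then obtain b where b: "b \<in> carrier G" "\<forall>j<m. \<forall>g\<in>carrier G. \<sigma> (g, j) = (g \<otimes> b, j)"
      using \<open>m = 1\<close> by auto
    show ?thesis using graph_aut_eq_rtrans[OF \<sigma> b] b(1) by blast
  next
    case False
    then have m: "2 \<le> m" using m_pos by linarith
    have layer: "snd (\<sigma> v) = p \<longleftrightarrow> snd v = p" if "v \<in> vertices" "p = 1 \<or> p = nx 1" for v p
      using graph_aut_preserves_layer[OF \<sigma> that(1)] layer_triangles_unique[OF m that(2)] by blast
    have "\<exists>b\<in>carrier G. \<forall>g\<in>carrier G. \<sigma> (g, nx 1) = (g \<otimes> b, nx 1)"
      using layer by (intro graph_aut_on_layer[OF \<sigma> nx_lt _ GRR]) simp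
    then obtain b where b: "b \<in> carrier G" "\<forall>g\<in>carrier G. \<sigma> (g, nx 1) = (g \<otimes> b, nx 1)"
      by blast
    have "\<forall>j<m. \<forall>g\<in>carrier G. \<sigma> (g, j) = (g \<otimes> b, j)"
      using layer by (intro mult_right_all_layers[OF \<sigma> m b]) simp_all
    then show ?thesis using graph_aut_eq_rtrans[OF \<sigma> b(1)] b(1) by blast
  qed
qed

lemma admits_mGRR_cycle: "admits_mGRR G m"
  using m_pos graph_aut_cycle_eq_rtrans regular_graph_cycle by (rule admits_mGRR_layers)

end

theorem corollary3p9:
  fixes G :: "('a, 'b) monoid_scheme" and m :: nat
  assumes "group G"
    and "finite (carrier G)"
    and "\<not> comm_group G"
    and "admits_GRR G"
    and "m \<ge> 1"
  shows "admits_mGRR G m"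
proof -
  obtain R where "cayley_GRR G R"
    using assms(1,2,4) by (rule admits_GRR_imp_cayley_GRR)
  then interpret cayley_GRR G R .
  obtain a r where "a \<in> carrier G" "r \<in> R" "a \<otimes>\<^bsub>G\<^esub> r \<otimes>\<^bsub>G\<^esub> inv\<^bsub>G\<^esub> a \<notin> R"
    using not_comm_imp_conj_notin[OF assms(3)] by blast
  then interpret GRR_cycle G R a r m
    using assms(5) by unfold_locales
  show ?thesis by (rule admits_mGRR_cycle)
qed

end
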